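(* Let $\rho$ be a density matrix and $\epsilon>0$. Consider the following process: a set of states $S$ is initially empty; for each query unit vector $|\psi\rangle$, let $|\psi_S\rangle$ be the orthogonal projection of $|\psi\rangle$ onto $\mathrm{span}(S)$; an oracle produces an estimate $\hat o$ with $|\langle\psi_S|\rho|\psi_S\rangle-\hat o|<\frac38\epsilon$; a mistake may be declared only if $|\langle\psi|\rho|\psi\rangle-\hat o|\ge\frac34\epsilon$, and whenever a mistake is declared, $|\psi\rangle$ is added to $S$. Then the total number of mistakes is at most $\frac{256}{9}\cdot\frac1{\epsilon^2}$.
   Context: Queries $|\psi\rangle$ may be chosen arbitrarily (adaptively); $\rho$ is positive semidefinite with unit trace. *)

theory Defs
  imports "HOL-Analysis.Analysis"
begin

definition braket :: "complex^'n \<Rightarrow> complex^'n \<Rightarrow> complex" where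
  "braket u v = (\<Sum>i\<in>UNIV. cnj (u $ i) * v $ i)"

definition unit_vec :: "complex^'n \<Rightarrow> bool" where
  "unit_vec v \<longleftrightarrow> braket v v = 1"

definition density_matrix :: "complex^'n^'n \<Rightarrow> bool" where
  "density_matrix \<rho> \<longleftrightarrow>
     (\<forall>i j. \<rho> $ i $ j = cnj (\<rho> $ j $ i)) \<and>
     (\<forall>v. Im (braket v (\<rho> *v v)) = 0 \<and> Re (braket v (\<rho> *v v)) \<ge> 0) \<and>
     trace \<rho> = 1"

text \<open>Expectation value <psi|rho|psi> (real since rho is Hermitian).\<close>
definition expect :: "complex^'n^'n \<Rightarrow> complex^'n \<Rightarrow> real" where
  "expect \<rho> \<psi> = Re (braket \<psi> (\<rho> *v \<psi>))"

definition oproj :: "(complex^'n) set \<Rightarrow> complex^'n \<Rightarrow> complex^'n" where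
  "oproj S \<psi> = (THE p. p \<in> vec.span S \<and> (\<forall>s\<in>vec.span S. braket s (\<psi> - p) = 0))"

end

(*
  For a mistake at time t let w_t be the component of psi_t orthogonal to the span of the earlier
  mistaken queries, so that psi_t - w_t is the projection on which the oracle is accurate. Since the
  estimate is 3eps/4-far from <psi_t|rho|psi_t> but 3eps/8-close to the expectation of the
  projection, the expectation moves by more than 3eps/8 when w_t is dropped; by Cauchy-Schwarz for
  the form of rho this forces <u_t|rho|u_t> > (3eps/16)^2 for the unit vector u_t = w_t/|w_t|.
  The u_t are orthonormal (the mistakes perform Gram-Schmidt), and the expectations of a positive
  semidefinite rho along an orthonormal family sum to at most tr rho = 1.
*)

theory Submission
  imports Defs
begin

lemma braket_add_right: "braket u (v + w) = braket u v + braket u w"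
  by (simp add: braket_def algebra_simps sum.distrib)

lemma braket_add_left: "braket (u + v) w = braket u w + braket v w"
  by (simp add: braket_def algebra_simps sum.distrib)

lemma braket_diff_right: "braket u (v - w) = braket u v - braket u w"
  by (simp add: braket_def algebra_simps sum_subtractf)

lemma braket_scale_right: "braket u (c *s v) = c * braket u v"
  by (simp add: braket_def sum_distrib_left algebra_simps)

lemma braket_scale_left: "braket (c *s u) v = cnj c * braket u v"
  by (simp add: braket_def sum_distrib_left algebra_simps)

lemma scaleR_eq_scalar_mult_of_real: "c *\<^sub>R v = complex_of_real c *s v"
  by (simp only: vec_eq_iff vector_scaleR_component vector_smult_component) (simp add: scaleR_conv_of_real)

lemma braket_scaleR_right: "braket u (c *\<^sub>R v) = of_real c * braket u v"
  by (simp add: scaleR_eq_scalar_mult_of_real braket_scale_right)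

lemma braket_scaleR_left: "braket (c *\<^sub>R u) v = of_real c * braket u v"
  by (simp add: scaleR_eq_scalar_mult_of_real braket_scale_left)

lemma cnj_braket: "cnj (braket u v) = braket v u"
  by (simp add: braket_def mult.commute)

lemma Re_braket: "Re (braket u v) = inner u v"
  by (simp add: braket_def inner_vec_def inner_complex_def)

lemma braket_self: "braket u u = of_real ((norm u)\<^sup>2)"
  by (simp add: complex_eq_iff Re_braket power2_norm_eq_inner) (simp add: braket_def algebra_simps)

lemma braket_self_eq_0_iff: "braket u u = 0 \<longleftrightarrow> u = 0"
  by (simp add: braket_self)

lemma unit_vec_iff_norm: "unit_vec v \<longleftrightarrow> norm v = 1"
  by (simp add: unit_vec_def braket_self flip: of_real_power)
     (simp add: abs_square_eq_1)

lemma braket_sgn_self: "u \<noteq> 0 \<Longrightarrow> braket (sgn u) (sgn u) = 1"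
  by (simp add: braket_self norm_sgn)

lemma braket_sgn_sgn: "braket u v = 0 \<Longrightarrow> braket (sgn u) (sgn v) = 0"
  by (simp add: sgn_div_norm divide_inverse_commute braket_scaleR_left braket_scaleR_right)

lemma expect_scaleR: "expect \<rho> (c *\<^sub>R v) = c\<^sup>2 * expect \<rho> v"
  by (simp add: expect_def scaleR_eq_scalar_mult_of_real vector_scalar_commute
      braket_scale_left braket_scale_right power2_eq_square)

lemma expect_zero [simp]: "expect \<rho> 0 = 0"
  by (simp add: expect_def braket_def)

lemma expect_sgn: "expect \<rho> (sgn v) = expect \<rho> v / (norm v)\<^sup>2"
  by (simp add: sgn_div_norm expect_scaleR divide_inverse_commute power_inverse)

lemma subspace_vec_span: "subspace (vec.span (S :: (complex^'n) set))"
  unfolding subspace_def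
proof (intro conjI ballI allI)
  fix c :: real and x assume "x \<in> vec.span S"
  then show "c *\<^sub>R x \<in> vec.span S"
    unfolding scaleR_eq_scalar_mult_of_real by (rule vec.span_scale)
qed (auto intro: vec.span_zero vec.span_add)

text \<open>The real orthogonal decomposition already gives the complex one: since the complex span
  is closed under multiplication by \<open>\<i>\<close>, real orthogonality to it kills both the real and the
  imaginary part of the Hermitian product.\<close>
lemma oproj_exists:
  fixes S :: "(complex^'n) set"
  shows "\<exists>p \<in> vec.span S. \<forall>s \<in> vec.span S. braket s (\<psi> - p) = 0"
proof -
  have span_eq: "span (vec.span S) = vec.span S"
    using subspace_vec_span span_eq_iff by blast
  obtain p z where p: "p \<in> vec.span S" and z: "\<And>s. s \<in> vec.span S \<Longrightarrow> orthogonal z s"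
    and decomp: "\<psi> = p + z"
    using orthogonal_subspace_decomp_exists[of "vec.span S" \<psi>] unfolding span_eq by blast
  have Re0: "Re (braket s z) = 0" if "s \<in> vec.span S" for s
    using z[OF that] by (simp add: Re_braket orthogonal_def inner_commute)
  have "braket s (\<psi> - p) = 0" if s: "s \<in> vec.span S" for s
  proof -
    have "\<i> *s s \<in> vec.span S" using s by (rule vec.span_scale)
    then have "Im (braket s z) = 0" using Re0 by (fastforce simp: braket_scale_left)
    then show ?thesis using Re0[OF s] decomp by (simp add: complex_eq_iff)
  qed
  with p show ?thesis by blast
qed

lemma oproj_unique:
  assumes "p \<in> vec.span S" "\<forall>s \<in> vec.span S. braket s (\<psi> - p) = 0"
    and "q \<in> vec.span S" "\<forall>s \<in> vec.span S. braket s (\<psi> - q) = 0"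
  shows "p = q"
proof -
  have "q - p \<in> vec.span S" using assms by (simp add: vec.span_diff)
  with assms have "braket (q - p) (\<psi> - p) - braket (q - p) (\<psi> - q) = 0" by simp
  then have "braket (q - p) (q - p) = 0" by (simp add: braket_diff_right algebra_simps)
  then show "p = q" by (simp add: braket_self_eq_0_iff)
qed

lemma oproj_orthogonal:
  fixes S :: "(complex^'n) set"
  shows oproj_in_span: "oproj S \<psi> \<in> vec.span S"
    and braket_oproj_residual: "s \<in> vec.span S \<Longrightarrow> braket s (\<psi> - oproj S \<psi>) = 0"
proof -
  have "\<exists>!p. p \<in> vec.span S \<and> (\<forall>s\<in>vec.span S. braket s (\<psi> - p) = 0)"
    using oproj_exists[of S \<psi>] oproj_unique by blast
  then have "oproj S \<psi> \<in> vec.span S \<and> (\<forall>s\<in>vec.span S. braket s (\<psi> - oproj S \<psi>) = 0)"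
    unfolding oproj_def by (rule theI')
  then show "oproj S \<psi> \<in> vec.span S" "s \<in> vec.span S \<Longrightarrow> braket s (\<psi> - oproj S \<psi>) = 0"
    by blast+
qed

definition hermitian :: "complex^'n^'n \<Rightarrow> bool" where
  "hermitian \<rho> \<longleftrightarrow> (\<forall>i j. \<rho> $ i $ j = cnj (\<rho> $ j $ i))"

lemma density_matrix_hermitian: "density_matrix \<rho> \<Longrightarrow> hermitian \<rho>"
  unfolding density_matrix_def hermitian_def by blast

lemma density_matrix_expect_nonneg: "density_matrix \<rho> \<Longrightarrow> 0 \<le> expect \<rho> v"
  by (simp add: density_matrix_def expect_def)

lemma density_matrix_trace: "density_matrix \<rho> \<Longrightarrow> Re (trace \<rho>) = 1"
  by (simp add: density_matrix_def)

lemma cnj_braket_hermitian: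
  assumes "hermitian \<rho>"
  shows "cnj (braket w (\<rho> *v v)) = braket v (\<rho> *v w)"
proof -
  have cnj_entry: "cnj (\<rho> $ i $ j) = \<rho> $ j $ i" for i j
    using assms by (metis complex_cnj_cnj hermitian_def)
  have "cnj (braket w (\<rho> *v v)) = (\<Sum>k\<in>UNIV. \<Sum>l\<in>UNIV. w $ k * (\<rho> $ l $ k * cnj (v $ l)))"
    by (simp add: braket_def matrix_vector_mult_def sum_distrib_left cnj_entry)
  also have "\<dots> = (\<Sum>l\<in>UNIV. \<Sum>k\<in>UNIV. w $ k * (\<rho> $ l $ k * cnj (v $ l)))"
    by (rule sum.swap)
  also have "\<dots> = braket v (\<rho> *v w)"
    by (simp add: braket_def matrix_vector_mult_def sum_distrib_left mult_ac)
  finally show ?thesis .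
qed

lemma expect_add:
  assumes "hermitian \<rho>"
  shows "expect \<rho> (v + w) = expect \<rho> v + expect \<rho> w + 2 * Re (braket v (\<rho> *v w))"
proof -
  have "Re (braket w (\<rho> *v v)) = Re (braket v (\<rho> *v w))"
    using arg_cong[OF cnj_braket_hermitian[OF assms, of v w], of Re] by simp
  then show ?thesis
    by (simp add: expect_def matrix_vector_right_distrib braket_add_left braket_add_right)
qed

lemma expect_scale: "expect \<rho> (c *s v) = (cmod c)\<^sup>2 * expect \<rho> v"
proof -
  have "braket (c *s v) (\<rho> *v (c *s v)) = (cnj c * c) * braket v (\<rho> *v v)"
    by (simp add: vector_scalar_commute braket_scale_left braket_scale_right mult.assoc)
  also have "cnj c * c = of_real ((cmod c)\<^sup>2)" by (metis complex_norm_square mult.commute)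
  finally show ?thesis by (simp add: expect_def del: of_real_power)
qed

lemma cmod_braket_hermitian_le:
  assumes herm: "hermitian \<rho>" and psd: "\<And>v. 0 \<le> expect \<rho> v"
  shows "(cmod (braket v (\<rho> *v w)))\<^sup>2 \<le> expect \<rho> v * expect \<rho> w"
proof -
  define c where "c = braket v (\<rho> *v w)"
  define n where "n = (cmod c)\<^sup>2"
  define y where "y = expect \<rho> v"
  define a where "a = expect \<rho> w"
  have quadratic: "0 \<le> y - 2 * t * n + t\<^sup>2 * n * a" for t :: real
  proof -
    define d where "d = - of_real t * cnj c"
    have "cnj c * c = of_real n" unfolding n_def by (metis complex_norm_square mult.commute)
    moreover have "braket v (\<rho> *v (d *s w)) = d * c"
      by (simp add: vector_scalar_commute braket_scale_right c_def)
    ultimately have cross: "Re (braket v (\<rho> *v (d *s w))) = - t * n"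
      by (simp add: d_def mult.assoc)
    have "(cmod d)\<^sup>2 = t\<^sup>2 * n" by (simp add: d_def n_def norm_mult power_mult_distrib)
    moreover have "0 \<le> expect \<rho> (v + d *s w)" by (rule psd)
    ultimately show ?thesis
      using cross by (simp add: expect_add[OF herm] expect_scale y_def a_def)
  qed
  have "y \<ge> 0" "a \<ge> 0" by (simp_all add: y_def a_def psd)
  have "n \<le> y * a"
  proof (cases "a = 0")
    case True
    have "n \<le> 0"
    proof (rule ccontr)
      assume "\<not> n \<le> 0"
      then have "y - 2 * ((y + 1) / (2 * n)) * n = -1" by (simp add: field_simps)
      then show False using quadratic[of "(y + 1) / (2 * n)"] True by simp
    qed
    then show ?thesis using True by simp
  next
    case False
    then have "a > 0" using \<open>a \<ge> 0\<close> by simp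
    have "0 \<le> y - 2 * (1 / a) * n + (1 / a)\<^sup>2 * n * a" by (rule quadratic)
    also have "\<dots> = (y * a - n) / a" using \<open>a > 0\<close> by (simp add: field_simps power2_eq_square)
    finally show ?thesis using \<open>a > 0\<close> by (simp add: zero_le_divide_iff)
  qed
  then show ?thesis by (simp add: n_def c_def y_def a_def)
qed

definition orthonormal_on :: "'i set \<Rightarrow> ('i \<Rightarrow> complex^'n) \<Rightarrow> bool" where
  "orthonormal_on I u \<longleftrightarrow> (\<forall>i\<in>I. \<forall>j\<in>I. braket (u i) (u j) = (if i = j then 1 else 0))"

lemma sum_braket_quadratic_form:
  "(\<Sum>m\<in>M. braket (r m) (\<rho> *v r m))
    = (\<Sum>k\<in>UNIV. \<Sum>l\<in>UNIV. \<rho> $ k $ l * (\<Sum>m\<in>M. cnj (r m $ k) * r m $ l))"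
proof -
  have "(\<Sum>m\<in>M. braket (r m) (\<rho> *v r m)) = (\<Sum>m\<in>M. \<Sum>k\<in>UNIV. \<Sum>l\<in>UNIV. \<rho> $ k $ l * (cnj (r m $ k) * r m $ l))"
    by (simp add: braket_def matrix_vector_mult_def sum_distrib_left mult_ac)
  also have "\<dots> = (\<Sum>k\<in>UNIV. \<Sum>l\<in>UNIV. \<Sum>m\<in>M. \<rho> $ k $ l * (cnj (r m $ k) * r m $ l))"
    by (subst sum.swap) (simp add: sum.swap[of _ M])
  finally show ?thesis by (simp add: sum_distrib_left)
qed

text \<open>With \<open>P = \<Sum>\<^sub>i |u\<^sub>i\<rangle>\<langle>u\<^sub>i|\<close> the orthogonal projector onto the span of an orthonormal family,
  the vectors \<open>(1 - P) e\<^sub>m\<close> satisfy \<open>\<Sum>\<^sub>m |(1 - P) e\<^sub>m\<rangle>\<langle>(1 - P) e\<^sub>m| = 1 - P\<close>, since \<open>P\<^sup>2 = P = P\<^sup>*\<close>.\<close>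
lemma sum_outer_projection_residuals:
  assumes "finite I" and orth: "orthonormal_on I u"
  defines "r m \<equiv> axis m 1 - (\<Sum>i\<in>I. braket (u i) (axis m 1) *s u i)"
  shows "(\<Sum>m\<in>UNIV. cnj (r m $ k) * r m $ l) = (if k = l then 1 else 0) - (\<Sum>i\<in>I. cnj (u i $ k) * u i $ l)"
proof -
  define P where "P k l = (\<Sum>i\<in>I. cnj (u i $ k) * u i $ l)" for k l
  have r_component: "r m $ k = (if m = k then 1 else 0) - P m k" for m k
    by (simp add: r_def P_def axis_def braket_def sum_component if_distrib cong: if_cong)
  have cnj_P: "cnj (P k l) = P l k" for k l
    by (simp add: P_def mult.commute)
  have cnj_r_component: "cnj (r m $ k) = (if m = k then 1 else 0) - P k m" for m k
    by (cases "m = k") (simp_all add: r_component cnj_P)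
  have P_idem: "(\<Sum>m\<in>UNIV. P k m * P m l) = P k l" for k l
  proof -
    have "(\<Sum>m\<in>UNIV. P k m * P m l)
        = (\<Sum>m\<in>UNIV. \<Sum>i\<in>I. \<Sum>j\<in>I. cnj (u i $ k) * u j $ l * (cnj (u j $ m) * u i $ m))"
      by (simp add: P_def sum_product mult_ac)
    also have "\<dots> = (\<Sum>i\<in>I. \<Sum>j\<in>I. \<Sum>m\<in>UNIV. cnj (u i $ k) * u j $ l * (cnj (u j $ m) * u i $ m))"
      by (subst sum.swap, rule sum.cong[OF refl], rule sum.swap)
    also have "\<dots> = (\<Sum>i\<in>I. \<Sum>j\<in>I. cnj (u i $ k) * u j $ l * (\<Sum>m\<in>UNIV. cnj (u j $ m) * u i $ m))"
      by (simp add: sum_distrib_left)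
    also have "\<dots> = (\<Sum>i\<in>I. \<Sum>j\<in>I. cnj (u i $ k) * u j $ l * (if j = i then 1 else 0))"
      using orth by (intro sum.cong refl) (simp add: orthonormal_on_def braket_def[symmetric])
    also have "\<dots> = P k l"
      using assms(1) by (simp add: P_def if_distrib cong: if_cong)
    finally show ?thesis .
  qed
  have "(\<Sum>m\<in>UNIV. cnj (r m $ k) * r m $ l)
      = (\<Sum>m\<in>UNIV. ((if m = k then 1 else 0) - P k m) * ((if m = l then 1 else 0) - P m l))"
    by (simp only: cnj_r_component[of _ k] r_component[of _ l])
  also have "\<dots> = (if k = l then 1 else 0) - P k l - P k l + (\<Sum>m\<in>UNIV. P k m * P m l)"
  proof -
    have "((if m = k then 1 else 0) - P k m) * ((if m = l then 1 else 0) - P m l)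
        = (if m = k then (if k = l then 1 else 0) - P k l else 0) - (if m = l then P k m else 0)
          + P k m * P m l" for m
      by (auto simp: algebra_simps)
    then show ?thesis by (simp add: sum.distrib sum_subtractf)
  qed
  also have "\<dots> = (if k = l then 1 else 0) - P k l"
    by (simp add: P_idem)
  finally show ?thesis by (simp add: P_def)
qed

lemma sum_expect_orthonormal_le_trace:
  assumes psd: "\<And>v. 0 \<le> expect \<rho> v" and "finite I" and "orthonormal_on I u"
  shows "(\<Sum>i\<in>I. expect \<rho> (u i)) \<le> Re (trace \<rho>)"
proof -
  define r where "r m = axis m 1 - (\<Sum>i\<in>I. braket (u i) (axis m 1) *s u i)" for m
  have "(\<Sum>m\<in>UNIV. braket (r m) (\<rho> *v r m))
      = (\<Sum>k\<in>UNIV. \<Sum>l\<in>UNIV. \<rho> $ k $ l * ((if k = l then 1 else 0) - (\<Sum>i\<in>I. cnj (u i $ k) * u i $ l)))"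
    unfolding sum_braket_quadratic_form r_def sum_outer_projection_residuals[OF assms(2,3)] ..
  also have "\<dots> = trace \<rho> - (\<Sum>i\<in>I. braket (u i) (\<rho> *v u i))"
    by (simp add: sum_braket_quadratic_form right_diff_distrib sum_subtractf)
       (simp add: trace_def if_distrib[of "(*) _"] cong: if_cong)
  finally have "(\<Sum>m\<in>UNIV. expect \<rho> (r m)) = Re (trace \<rho>) - (\<Sum>i\<in>I. expect \<rho> (u i))"
    unfolding expect_def by (metis Re_sum minus_complex.sel(1))
  moreover have "0 \<le> (\<Sum>m\<in>UNIV. expect \<rho> (r m))" by (simp add: psd sum_nonneg)
  ultimately show ?thesis by simp
qed

lemma expect_le_norm_square:
  assumes "density_matrix \<rho>"
  shows "expect \<rho> v \<le> (norm v)\<^sup>2"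
proof (cases "v = 0")
  case False
  have "orthonormal_on {()} (\<lambda>_. sgn v)"
    using False by (simp add: orthonormal_on_def braket_sgn_self)
  then have "(\<Sum>i\<in>{()}. expect \<rho> (sgn v)) \<le> Re (trace \<rho>)"
    using assms by (intro sum_expect_orthonormal_le_trace density_matrix_expect_nonneg) auto
  then have "expect \<rho> v / (norm v)\<^sup>2 \<le> 1"
    using assms by (simp add: expect_sgn density_matrix_trace)
  then show ?thesis using False by (simp add: field_simps)
qed simp

text \<open>The change is \<open>\<langle>w|\<rho>|w\<rangle> + 2 Re \<langle>p|\<rho>|w\<rangle>\<close>; Cauchy--Schwarz and \<open>\<parallel>p\<parallel>\<^sup>2 + \<parallel>w\<parallel>\<^sup>2 = 1\<close> bound
  both terms by multiples of \<open>\<surd>\<langle>sgn w|\<rho>|sgn w\<rangle>\<close>.\<close>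
lemma expect_orthogonal_perturbation:
  assumes dm: "density_matrix \<rho>" and unit: "norm (p + w) = 1" and orth: "braket p w = 0"
  shows "\<bar>expect \<rho> (p + w) - expect \<rho> p\<bar> \<le> 2 * sqrt (expect \<rho> (sgn w))"
proof -
  define s where "s = sqrt (expect \<rho> (sgn w))"
  have herm: "hermitian \<rho>" and psd: "\<And>v. 0 \<le> expect \<rho> v"
    using dm by (simp_all add: density_matrix_hermitian density_matrix_expect_nonneg)
  have "expect \<rho> (sgn w) \<le> 1"
    using expect_le_norm_square[OF dm, of "sgn w"] by (simp add: norm_sgn split: if_splits)
  then have s: "0 \<le> s" "s \<le> 1" by (simp_all add: s_def psd)
  have pythagoras: "(norm p)\<^sup>2 + (norm w)\<^sup>2 = 1"
    using norm_add_Pythagorean[of p w] orth unit by (simp add: orthogonal_def flip: Re_braket)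
  have expect_w: "expect \<rho> w = (norm w)\<^sup>2 * s\<^sup>2"
    by (cases "w = 0") (simp_all add: s_def psd expect_sgn)
  have "(cmod (braket p (\<rho> *v w)))\<^sup>2 \<le> expect \<rho> p * expect \<rho> w"
    by (rule cmod_braket_hermitian_le[OF herm psd])
  also have "\<dots> \<le> (norm p * norm w * s)\<^sup>2"
    using mult_right_mono[OF expect_le_norm_square[OF dm, of p], of "(norm w)\<^sup>2 * s\<^sup>2"]
    by (simp add: expect_w power_mult_distrib mult.assoc)
  finally have "cmod (braket p (\<rho> *v w)) \<le> norm p * norm w * s"
    by (rule power2_le_imp_le) (simp add: s(1))
  then have cross: "\<bar>Re (braket p (\<rho> *v w))\<bar> \<le> norm p * norm w * s"
    using abs_Re_le_cmod order_trans by blast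
  have "\<bar>expect \<rho> (p + w) - expect \<rho> p\<bar> \<le> (norm w)\<^sup>2 * s\<^sup>2 + 2 * (norm p * norm w * s)"
    using cross psd[of w] unfolding expect_add[OF herm] expect_w by arith
  also have "\<dots> \<le> s * ((norm w)\<^sup>2 + 2 * norm p * norm w)"
    using s by (simp add: algebra_simps power2_eq_square mult_left_le_one_le mult_left_mono)
  also have "\<dots> \<le> s * 2"
  proof (rule mult_left_mono[OF _ s(1)])
    show "(norm w)\<^sup>2 + 2 * norm p * norm w \<le> 2"
      using pythagoras sum_squares_bound[of "norm p" "norm w"] zero_le_power2[of "norm p"]
      by linarith
  qed
  finally show ?thesis by (simp add: s_def mult.commute)
qed

lemma braket_oproj_residuals_eq_0:
  fixes \<psi> :: "nat \<Rightarrow> complex^'n" and P :: "nat \<Rightarrow> bool"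
  defines "res t \<equiv> \<psi> t - oproj (\<psi> ` {k. k < t \<and> P k}) (\<psi> t)"
  assumes "P i" "i < j"
  shows "braket (res i) (res j) = 0"
proof -
  let ?S = "\<lambda>t. \<psi> ` {k. k < t \<and> P k}"
  have "\<psi> i \<in> vec.span (?S j)" using assms by (blast intro: vec.span_base)
  moreover have "oproj (?S i) (\<psi> i) \<in> vec.span (?S j)"
    using oproj_in_span vec.span_mono[of "?S i" "?S j"] assms(3) by fastforce
  ultimately have "res i \<in> vec.span (?S j)" unfolding res_def by (rule vec.span_diff)
  then show ?thesis unfolding res_def by (rule braket_oproj_residual)
qed

lemma orthonormal_on_sgn_oproj_residuals:
  fixes \<psi> :: "nat \<Rightarrow> complex^'n" and P :: "nat \<Rightarrow> bool"
  defines "res t \<equiv> \<psi> t - oproj (\<psi> ` {k. k < t \<and> P k}) (\<psi> t)"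
  assumes "\<And>i. i \<in> I \<Longrightarrow> P i \<and> res i \<noteq> 0"
  shows "orthonormal_on I (\<lambda>t. sgn (res t))"
  unfolding orthonormal_on_def
proof (intro ballI)
  fix i j assume "i \<in> I" "j \<in> I"
  then have "res i \<noteq> 0" "P i" "P j" using assms(2) by auto
  then show "braket (sgn (res i)) (sgn (res j)) = (if i = j then 1 else 0)"
    using braket_oproj_residuals_eq_0[of P i j \<psi>, folded res_def]
      braket_oproj_residuals_eq_0[of P j i \<psi>, folded res_def] cnj_braket[of "res i" "res j"]
    by (cases i j rule: linorder_cases) (auto simp: braket_sgn_self braket_sgn_sgn)
qed

lemma expect_sgn_oproj_residual_gt:
  assumes "density_matrix \<rho>" and "norm \<psi> = 1" and "0 \<le> \<delta>"
    and "2 * \<delta> < \<bar>expect \<rho> \<psi> - expect \<rho> (oproj S \<psi>)\<bar>"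
  shows "\<delta>\<^sup>2 < expect \<rho> (sgn (\<psi> - oproj S \<psi>))"
proof -
  let ?p = "oproj S \<psi>" and ?w = "\<psi> - oproj S \<psi>"
  have "2 * \<delta> < \<bar>expect \<rho> (?p + ?w) - expect \<rho> ?p\<bar>" using assms(4) by simp
  also have "\<dots> \<le> 2 * sqrt (expect \<rho> (sgn ?w))"
    using assms(1,2)
    by (intro expect_orthogonal_perturbation) (simp_all add: braket_oproj_residual oproj_in_span)
  finally have "sqrt (\<delta>\<^sup>2) < sqrt (expect \<rho> (sgn ?w))" using assms(3) by simp
  then show ?thesis by (simp only: real_sqrt_less_iff)
qed

theorem mainTheorem15:
  fixes \<rho> :: "complex^'n^'n" and \<epsilon> :: real
    and \<psi> :: "nat \<Rightarrow> complex^'n"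
    and ohat :: "nat \<Rightarrow> real"
    and mistake :: "nat \<Rightarrow> bool"
    and N :: nat
  assumes "density_matrix \<rho>" and "\<epsilon> > 0"
    and "\<And>t. unit_vec (\<psi> t)"
    and "\<And>t. \<bar>expect \<rho> (oproj (\<psi> ` {j. j < t \<and> mistake j}) (\<psi> t)) - ohat t\<bar> < 3/8 * \<epsilon>"
    and "\<And>t. mistake t \<Longrightarrow> \<bar>expect \<rho> (\<psi> t) - ohat t\<bar> \<ge> 3/4 * \<epsilon>"
  shows "real (card {t. t < N \<and> mistake t}) \<le> 256/9 * (1 / \<epsilon>^2)"
proof -
  define w where "w t = \<psi> t - oproj (\<psi> ` {j. j < t \<and> mistake j}) (\<psi> t)" for t
  define I where "I = {t. t < N \<and> mistake t}"
  have large: "(3/16 * \<epsilon>)\<^sup>2 < expect \<rho> (sgn (w t))" if "mistake t" for t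
  proof -
    have "2 * (3/16 * \<epsilon>) < \<bar>expect \<rho> (\<psi> t) - expect \<rho> (oproj (\<psi> ` {j. j < t \<and> mistake j}) (\<psi> t))\<bar>"
      using assms(4)[of t] assms(5)[OF that] by linarith
    then show ?thesis
      unfolding w_def using assms(1-3)
      by (intro expect_sgn_oproj_residual_gt) (simp_all add: unit_vec_iff_norm)
  qed
  then have "orthonormal_on I (\<lambda>t. sgn (w t))"
    unfolding w_def I_def by (intro orthonormal_on_sgn_oproj_residuals) (force simp: w_def)
  then have "(\<Sum>t\<in>I. expect \<rho> (sgn (w t))) \<le> 1"
    using sum_expect_orthonormal_le_trace[of \<rho> I] assms(1)
    by (simp add: I_def density_matrix_expect_nonneg density_matrix_trace)
  moreover have "(\<Sum>t\<in>I. (3/16 * \<epsilon>)\<^sup>2) \<le> (\<Sum>t\<in>I. expect \<rho> (sgn (w t)))"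
    using large by (intro sum_mono) (simp add: I_def less_imp_le)
  ultimately have "real (card I) * (3/16 * \<epsilon>)\<^sup>2 \<le> 1" by simp
  then show ?thesis using assms(2) by (simp add: I_def field_simps power2_eq_square)
qed

end
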